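(* Let $X\subset\mathbb{R}^n$ and $U\subset\mathbb{R}^m$ be compact, $f:X\times U\to\mathbb{R}^n$ Lipschitz continuous, and consider $\dot{\mathbf{x}}(t)=f(\mathbf{x}(t),\mathbf{u}(t))$. Let $\Phi=\bigwedge_{i=1}^N\phi_i$ be an STL specification of the fragment described in the context, over $[0,T]$, such that $\Phi_a(t)\neq\emptyset$ for all $t\in[0,T]$. Let $W=X\times[0,T]$ and $\mathcal{S}^\Phi(t)=\{(x,t)\in W \mid \min_{\varphi_i\in\Phi_a(t)}\rho^{\varphi_i}(x)\geq 0\}$. Suppose there exist a time-varying set $\mathcal{C}^\Phi(t)\subset\mathcal{S}^\Phi(t)$, a continuously differentiable function $\mathcal{B}:W\to\mathbb{R}$, a continuous controller $g:X\times[0,T]\to U$ and an extended class $\mathcal{K}$ function $\alpha$ such that: $\mathcal{B}(x,t)\geq 0$ for all $(x,t)\in\mathcal{C}^\Phi(t)$; $\mathcal{B}(x,t)<0$ for all $(x,t)\in W\setminus\mathcal{C}^\Phi(t)$; and $\frac{\partial\mathcal{B}}{\partial x}(x,t) f(x,g(x,t))+\frac{\partial\mathcal{B}}{\partial t}(x,t)\geq-\alpha(\mathcal{B}(x,t))$ for all $(x,t)\in W$. Then the trajectory $\mathbf{x}_{x_0,\mathbf{u}}$ starting from $x_0$ with $(x_0,0)\in\mathcal{C}^\Phi(0)$ under $\mathbf{u}(t)=g(\mathbf{x}(t),t)$ satisfies $(\mathbf{x}_{x_0,\mathbf{u}}(t),t)\in\mathcal{C}^\Phi(t)$ for all $t\in[0,T]$,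 and $\mathbf{x}_{x_0,\mathbf{u}}\models\Phi$.
   Context: STL fragment: a predicate $\mu$ is given by a function $h:X\to\mathbb{R}$ and is true at $x$ iff $h(x)\geq0$. Non-temporal formulas $\varphi ::= \mathsf{true}\mid\mu\mid\lnot\varphi\mid\varphi_1\wedge\varphi_2\mid\varphi_1\vee\varphi_2$, with pointwise robustness $\rho^\mu(x)=h(x)$, $\rho^{\lnot\varphi}=-\rho^\varphi$, $\rho^{\varphi_1\wedge\varphi_2}=\min(\rho^{\varphi_1},\rho^{\varphi_2})$, $\rho^{\varphi_1\vee\varphi_2}=\max(\rho^{\varphi_1},\rho^{\varphi_2})$. Each $\phi_i$ is either $\square_{[a_i,b_i]}\varphi_i$ or $\lozenge_{[a_i,b_i]}\varphi_i$ with $[a_i,b_i]\subseteq[0,T]$. For a signal $\mathbf{x}$, $\rho^{\square_{[a,b]}\varphi}(\mathbf{x})=\min_{t'\in[a,b]}\rho^\varphi(\mathbf{x}(t'))$, $\rho^{\lozenge_{[a,b]}\varphi}(\mathbf{x})=\max_{t'\in[a,b]}\rho^\varphi(\mathbf{x}(t'))$, $\rho^\Phi(\mathbf{x})=\min_i\rho^{\phi_i}(\mathbf{x})$, and $\mathbf{x}\models\Phi$ iff $\rho^\Phi(\mathbf{x})\geq0$. For each $i$ define an interval $I_i=[a_i,b_i]$ if $\phi_i$ is an always formula, and $I_i=[t_i^*,t_i^*+\delta]$ for some fixed $a_i\leq t_i^*<t_i^*+\delta\leq b_i$, $\delta>0$, if $\phi_i$ is an eventually formula. The active predicate set is $\Phi_a(t)=\{\varphi_i\mid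 t\in I_i\}$. An extended class $\mathcal{K}$ function is continuous, strictly increasing, with $\alpha(0)=0$. $\mathbf{x}_{x_0,\mathbf{u}}$ denotes the trajectory from $x_0$ under input $\mathbf{u}$. *)

theory Defs
  imports "HOL-Analysis.Analysis" "HOL-Library.Extended_Real"
begin

datatype 'x ntf = TrueF | Pred "'x \<Rightarrow> real" | NotF "'x ntf"
  | AndF "'x ntf" "'x ntf" | OrF "'x ntf" "'x ntf"

fun rho :: "'x ntf \<Rightarrow> 'x \<Rightarrow> ereal" where
  "rho TrueF x = \<infinity>"
| "rho (Pred h) x = ereal (h x)"
| "rho (NotF p) x = - rho p x"
| "rho (AndF p q) x = min (rho p x) (rho q x)"
| "rho (OrF p q) x = max (rho p x) (rho q x)"

datatype 'x tf = Always real real "'x ntf" | Eventually real real "'x ntf"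

fun tf_pred :: "'x tf \<Rightarrow> 'x ntf" where
  "tf_pred (Always a b p) = p" | "tf_pred (Eventually a b p) = p"
fun tf_lo :: "'x tf \<Rightarrow> real" where
  "tf_lo (Always a b p) = a" | "tf_lo (Eventually a b p) = a"
fun tf_hi :: "'x tf \<Rightarrow> real" where
  "tf_hi (Always a b p) = b" | "tf_hi (Eventually a b p) = b"
fun is_eventually :: "'x tf \<Rightarrow> bool" where
  "is_eventually (Always a b p) = False" | "is_eventually (Eventually a b p) = True"

fun rho_tf :: "'x tf \<Rightarrow> (real \<Rightarrow> 'x) \<Rightarrow> ereal" where
  "rho_tf (Always a b p) s = (INF t'\<in>{a..b}. rho p (s t'))"
| "rho_tf (Eventually a b p) s = (SUP t'\<in>{a..b}. rho p (s t'))"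

definition rho_spec :: "'x tf list \<Rightarrow> (real \<Rightarrow> 'x) \<Rightarrow> ereal" where
  "rho_spec Phi s = Min ((\<lambda>i. rho_tf (Phi ! i) s) ` {..<length Phi})"

definition sat_spec :: "(real \<Rightarrow> 'x) \<Rightarrow> 'x tf list \<Rightarrow> bool" where
  "sat_spec s Phi \<longleftrightarrow> rho_spec Phi s \<ge> 0"

definition wf_spec :: "'x tf list \<Rightarrow> real \<Rightarrow> (nat \<Rightarrow> real) \<Rightarrow> real \<Rightarrow> bool" where
  "wf_spec Phi T tstar \<delta> \<longleftrightarrow> \<delta> > 0 \<and> (\<forall>i<length Phi.
      0 \<le> tf_lo (Phi ! i) \<and> tf_lo (Phi ! i) \<le> tf_hi (Phi ! i) \<and> tf_hi (Phi ! i) \<le> T \<and>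
      (is_eventually (Phi ! i) \<longrightarrow>
         tf_lo (Phi ! i) \<le> tstar i \<and> tstar i + \<delta> \<le> tf_hi (Phi ! i)))"

definition act_int :: "'x tf list \<Rightarrow> (nat \<Rightarrow> real) \<Rightarrow> real \<Rightarrow> nat \<Rightarrow> real set" where
  "act_int Phi tstar \<delta> i =
     (if is_eventually (Phi ! i) then {tstar i .. tstar i + \<delta>}
      else {tf_lo (Phi ! i) .. tf_hi (Phi ! i)})"

definition active :: "'x tf list \<Rightarrow> (nat \<Rightarrow> real) \<Rightarrow> real \<Rightarrow> real \<Rightarrow> 'x ntf set" where
  "active Phi tstar \<delta> t = {tf_pred (Phi ! i) | i. i < length Phi \<and> t \<in> act_int Phi tstar \<delta> i}"

text \<open>S^Phi(t), represented as the set of states x (with (x,t) in W = X x [0,T]).\<close>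
definition safe_set :: "'x set \<Rightarrow> real \<Rightarrow> 'x tf list \<Rightarrow> (nat \<Rightarrow> real) \<Rightarrow> real \<Rightarrow> real \<Rightarrow> 'x set" where
  "safe_set X T Phi tstar \<delta> t =
     {x \<in> X. t \<in> {0..T} \<and> Min ((\<lambda>p. rho p x) ` active Phi tstar \<delta> t) \<ge> 0}"

definition ext_class_K :: "(real \<Rightarrow> real) \<Rightarrow> bool" where
  "ext_class_K \<alpha> \<longleftrightarrow> continuous_on UNIV \<alpha> \<and> strict_mono \<alpha> \<and> \<alpha> 0 = 0"

end

theory Submission
  imports Defs
begin

text \<open>Along the closed-loop trajectory, b(t) = B(x(t), t) satisfies
  b' \<ge> -\<alpha>(b); since \<alpha> is negative on negative reals, b is strictly increasing wherever
  it is negative, so starting from b(0) \<ge> 0 it can never become negative (look at the last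
  time before a hypothetical negative value at which b was still nonnegative and apply the
  mean value theorem). Hence the trajectory stays in C(t) \<subseteq> S(t). Every active interval
  I_i lies in [0,T], so the predicate of \<phi>_i is robustly satisfied on all of I_i: for an
  always formula I_i is its whole window, and for an eventually formula I_i contains the
  witness time t_i^*.\<close>

lemma nonneg_if_deriv_pos_where_neg:
  fixes b db :: "real \<Rightarrow> real"
  assumes deriv: "\<And>s. s \<in> {a..c} \<Longrightarrow> (b has_real_derivative db s) (at s within {a..c})"
    and init: "b a \<ge> 0"
    and pos: "\<And>s. s \<in> {a..c} \<Longrightarrow> b s < 0 \<Longrightarrow> db s > 0"
    and t: "t \<in> {a..c}"
  shows "b t \<ge> 0"
proof (rule ccontr)
  assume neg: "\<not> b t \<ge> 0"
  define S where "S = {a..t} \<inter> b -` {0..}"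
  have "continuous_on {a..c} b"
    using deriv by (rule DERIV_continuous_on)
  then have "continuous_on {a..t} b"
    by (rule continuous_on_subset) (use t in auto)
  then have "closed S"
    unfolding S_def by (intro continuous_closed_preimage) auto
  then have "compact S"
    unfolding S_def by (simp add: compact_eq_bounded_closed bounded_Int)
  moreover have "a \<in> S" using init t by (simp add: S_def)
  ultimately obtain s where "s \<in> S" and last: "\<forall>y\<in>S. y \<le> s"
    using compact_attains_sup by blast
  then have s: "a \<le> s" "s \<le> t" "b s \<ge> 0" by (auto simp: S_def)
  have "s < t" using neg s by (metis order_le_less)
  have deriv_st: "(b has_derivative (\<lambda>h. db z * h)) (at z within {s..t})"
    if "s \<le> z" "z \<le> t" for z
    using DERIV_subset[OF deriv, of z "{s..t}"] that s t by (simp add: has_field_derivative_def)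
  have "\<exists>z\<in>{s<..<t}. b t - b s = db z * (t - s)"
    using mvt_simple[OF \<open>s < t\<close> deriv_st] by simp
  then obtain z where z: "s < z" "z < t" and mvt: "b t - b s = db z * (t - s)" by auto
  have "z \<notin> S" using last z by force
  then have "b z < 0" using s z by (auto simp: S_def)
  then have "db z * (t - s) > 0" using pos s z t by simp
  with mvt s neg show False by linarith
qed

lemma has_real_derivative_along_trajectory:
  fixes B :: "'a::real_inner \<times> real \<Rightarrow> real" and x :: "real \<Rightarrow> 'a"
  assumes B: "(B has_derivative (\<lambda>(dx, dt). Bx \<bullet> dx + Bt * dt)) (at (x t, t) within S)"
    and x: "(x has_vector_derivative v) (at t within I)"
    and graph: "\<And>s. s \<in> I \<Longrightarrow> (x s, s) \<in> S"
  shows "((\<lambda>s. B (x s, s)) has_real_derivative (Bx \<bullet> v + Bt)) (at t within I)"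
proof -
  have graph_deriv: "((\<lambda>s. (x s, s)) has_derivative (\<lambda>h. (h *\<^sub>R v, h))) (at t within I)"
    using x by (intro has_derivative_Pair has_derivative_ident) (simp add: has_vector_derivative_def)
  have B_on_graph: "(B has_derivative (\<lambda>(dx, dt). Bx \<bullet> dx + Bt * dt))
      (at (x t, t) within (\<lambda>s. (x s, s)) ` I)"
    by (rule has_derivative_subset[OF B]) (auto intro: graph)
  have "(\<lambda>(dx, dt). Bx \<bullet> dx + Bt * dt) \<circ> (\<lambda>h. (h *\<^sub>R v, h)) = (\<lambda>h. (Bx \<bullet> v + Bt) * h)"
    by (auto simp: fun_eq_iff algebra_simps)
  with diff_chain_within[OF graph_deriv B_on_graph] show ?thesis
    by (simp add: has_field_derivative_def o_def)
qed

lemma ext_class_K_neg: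
  assumes "ext_class_K \<alpha>" and "r < 0"
  shows "\<alpha> r < 0"
  using assms unfolding ext_class_K_def strict_mono_def by metis

lemma barrier_nonneg_along_trajectory:
  fixes B :: "'a::real_inner \<times> real \<Rightarrow> real" and x F :: "real \<Rightarrow> 'a"
  assumes B: "\<And>p. p \<in> S \<Longrightarrow> (B has_derivative (\<lambda>(dx, dt). Bx p \<bullet> dx + Bt p * dt)) (at p within S)"
    and x: "\<And>s. s \<in> {a..c} \<Longrightarrow> (x has_vector_derivative F s) (at s within {a..c})"
    and graph: "\<And>s. s \<in> {a..c} \<Longrightarrow> (x s, s) \<in> S"
    and \<alpha>: "ext_class_K \<alpha>"
    and cbf: "\<And>s. s \<in> {a..c} \<Longrightarrow> Bx (x s, s) \<bullet> F s + Bt (x s, s) \<ge> - \<alpha> (B (x s, s))"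
    and init: "B (x a, a) \<ge> 0"
    and t: "t \<in> {a..c}"
  shows "B (x t, t) \<ge> 0"
proof (rule nonneg_if_deriv_pos_where_neg[where b = "\<lambda>s. B (x s, s)"])
  fix s assume s: "s \<in> {a..c}"
  show "((\<lambda>s. B (x s, s)) has_real_derivative Bx (x s, s) \<bullet> F s + Bt (x s, s))
      (at s within {a..c})"
    using B[OF graph[OF s]] x[OF s] graph by (rule has_real_derivative_along_trajectory)
  assume "B (x s, s) < 0"
  with \<alpha> cbf[OF s] show "Bx (x s, s) \<bullet> F s + Bt (x s, s) > 0"
    using ext_class_K_neg by fastforce
qed (use init t in auto)

lemma act_int_subset:
  assumes "wf_spec Phi T tstar \<delta>" and "i < length Phi"
  shows "act_int Phi tstar \<delta> i \<subseteq> {0..T}"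
  using assms unfolding wf_spec_def act_int_def by (auto split: if_splits)

lemma safe_set_rho_active_nonneg:
  assumes "y \<in> safe_set X T Phi tstar \<delta> t"
    and "i < length Phi" and "t \<in> act_int Phi tstar \<delta> i"
  shows "rho (tf_pred (Phi ! i)) y \<ge> 0"
proof -
  have active: "tf_pred (Phi ! i) \<in> active Phi tstar \<delta> t"
    using assms(2,3) unfolding active_def by blast
  have "active Phi tstar \<delta> t \<subseteq> (\<lambda>i. tf_pred (Phi ! i)) ` {..<length Phi}"
    unfolding active_def by auto
  then have "finite (active Phi tstar \<delta> t)" by (rule finite_subset) simp
  then have "Min ((\<lambda>p. rho p y) ` active Phi tstar \<delta> t) \<le> rho (tf_pred (Phi ! i)) y"
    using active by (intro Min_le) auto
  moreover have "Min ((\<lambda>p. rho p y) ` active Phi tstar \<delta> t) \<ge> 0"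
    using assms(1) unfolding safe_set_def by blast
  ultimately show ?thesis by order
qed

lemma rho_tf_nonneg_if_act_int:
  assumes wf: "wf_spec Phi T tstar \<delta>" and i: "i < length Phi"
    and nonneg: "\<And>t. t \<in> act_int Phi tstar \<delta> i \<Longrightarrow> rho (tf_pred (Phi ! i)) (s t) \<ge> 0"
  shows "rho_tf (Phi ! i) s \<ge> 0"
proof (cases "Phi ! i")
  case (Always a c p)
  with nonneg show ?thesis by (auto simp: act_int_def intro: INF_greatest)
next
  case (Eventually a c p)
  with wf i have witness: "tstar i \<in> {a..c}" "tstar i \<in> act_int Phi tstar \<delta> i"
    unfolding wf_spec_def act_int_def by fastforce+
  have "0 \<le> rho p (s (tstar i))" using nonneg[OF witness(2)] Eventually by simp
  also have "\<dots> \<le> (SUP t'\<in>{a..c}. rho p (s t'))" using witness(1) by (rule SUP_upper)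
  finally show ?thesis using Eventually by simp
qed

lemma sat_spec_if_rho_tf_nonneg:
  assumes "Phi \<noteq> []" and "\<And>i. i < length Phi \<Longrightarrow> rho_tf (Phi ! i) s \<ge> 0"
  shows "sat_spec s Phi"
  unfolding sat_spec_def rho_spec_def using assms by (subst Min_ge_iff) auto

lemma sat_spec_if_in_safe_set:
  assumes "wf_spec Phi T tstar \<delta>" and "Phi \<noteq> []"
    and "\<And>t. t \<in> {0..T} \<Longrightarrow> s t \<in> safe_set X T Phi tstar \<delta> t"
  shows "sat_spec s Phi"
proof (rule sat_spec_if_rho_tf_nonneg[OF assms(2)])
  fix i assume i: "i < length Phi"
  show "rho_tf (Phi ! i) s \<ge> 0"
  proof (rule rho_tf_nonneg_if_act_int[OF assms(1) i])
    fix t assume "t \<in> act_int Phi tstar \<delta> i"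
    moreover from this have "s t \<in> safe_set X T Phi tstar \<delta> t"
      using act_int_subset[OF assms(1) i] assms(3) by blast
    ultimately show "rho (tf_pred (Phi ! i)) (s t) \<ge> 0"
      using i by (intro safe_set_rho_active_nonneg)
  qed
qed

text \<open>The compactness, Lipschitz and continuity hypotheses only serve to guarantee that the
  closed-loop trajectory exists.\<close>

theorem theorem2:
  fixes X :: "(real ^ 'n) set" and U :: "(real ^ 'm) set"
    and f :: "(real ^ 'n) \<times> (real ^ 'm) \<Rightarrow> real ^ 'n"
    and T :: real and Phi :: "(real ^ 'n) tf list" and tstar :: "nat \<Rightarrow> real" and \<delta> :: real
    and C :: "real \<Rightarrow> (real ^ 'n) set"
    and B :: "(real ^ 'n) \<times> real \<Rightarrow> real"
    and Bx :: "(real ^ 'n) \<times> real \<Rightarrow> real ^ 'n" and Bt :: "(real ^ 'n) \<times> real \<Rightarrow> real"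
    and g :: "(real ^ 'n) \<times> real \<Rightarrow> real ^ 'm"
    and \<alpha> :: "real \<Rightarrow> real"
    and x0 :: "real ^ 'n" and x :: "real \<Rightarrow> real ^ 'n"
  assumes X: "compact X" and U: "compact U"
    and f_lip: "\<exists>L. L-lipschitz_on (X \<times> U) f"
    and Phi_ne: "Phi \<noteq> []"
    and wf: "wf_spec Phi T tstar \<delta>"
    and active_ne: "\<forall>t\<in>{0..T}. active Phi tstar \<delta> t \<noteq> {}"
    and C_sub: "\<forall>t\<in>{0..T}. C t \<subseteq> safe_set X T Phi tstar \<delta> t"
    and B_C1: "\<forall>p\<in>X \<times> {0..T}.
        (B has_derivative (\<lambda>(dx, dt). Bx p \<bullet> dx + Bt p * dt)) (at p within X \<times> {0..T})"
    and Bx_cont: "continuous_on (X \<times> {0..T}) Bx"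
    and Bt_cont: "continuous_on (X \<times> {0..T}) Bt"
    and g_cont: "continuous_on (X \<times> {0..T}) g"
    and g_U: "\<forall>p\<in>X \<times> {0..T}. g p \<in> U"
    and \<alpha>: "ext_class_K \<alpha>"
    and B_pos: "\<forall>t\<in>{0..T}. \<forall>y\<in>C t. B (y, t) \<ge> 0"
    and B_neg: "\<forall>t\<in>{0..T}. \<forall>y\<in>X - C t. B (y, t) < 0"
    and B_cbf: "\<forall>y\<in>X. \<forall>t\<in>{0..T}.
        Bx (y, t) \<bullet> f (y, g (y, t)) + Bt (y, t) \<ge> - \<alpha> (B (y, t))"
    and x0_C: "x0 \<in> C 0"
    and traj_init: "x 0 = x0"
    and traj_X: "\<forall>t\<in>{0..T}. x t \<in> X"
    and traj_ode: "\<forall>t\<in>{0..T}.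
        (x has_vector_derivative f (x t, g (x t, t))) (at t within {0..T})"
  shows "(\<forall>t\<in>{0..T}. x t \<in> C t) \<and> sat_spec x Phi"
proof -
  have B_nonneg: "B (x t, t) \<ge> 0" if t: "t \<in> {0..T}" for t
  proof (rule barrier_nonneg_along_trajectory[where S = "X \<times> {0..T}"
        and F = "\<lambda>s. f (x s, g (x s, s))", OF _ _ _ \<alpha> _ _ t])
    show "0 \<le> B (x 0, 0)" using B_pos x0_C traj_init t by simp
  qed (use B_C1 traj_ode traj_X B_cbf in auto)
  have in_C: "\<forall>t\<in>{0..T}. x t \<in> C t"
    using B_nonneg B_neg traj_X by (meson DiffI not_le)
  then have "sat_spec x Phi"
    using C_sub by (intro sat_spec_if_in_safe_set[OF wf Phi_ne]) blast
  with in_C show ?thesis by blast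
qed

end
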